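(* Let $h_1,h_2\in\mathbb{C}\setminus\{0\}$ with $|h_1|>|h_2|$, deadlines $D_1<D_2$, minimum blocklength $\hat m>0$, power budget $P_{\max}>0$, packet sizes $N_1,N_2>0$ and error probabilities $\epsilon_1,\epsilon_2\in(0,1)$. For $k=1,2$ define, for $m>0,\gamma>0$, $$F_k(m,\gamma)=\sqrt{\frac{1}{m}\left(1-\frac{1}{(\gamma+1)^2}\right)}\,\frac{Q^{-1}(\epsilon_k)}{\ln 2}-\log_2(1+\gamma)+\frac{N_k}{m},$$ and let $\Gamma_k(m)$ denote the implicit function defined by $F_k(m,\Gamma_k(m))=0$, $\Gamma_k(m)>0$. Consider the problem $$\min_{\{m_k,p_k,\gamma_k\}_{k=1,2}} m_1p_1+m_2p_2$$ subject to $F_k(m_k,\gamma_k)=0$, $\hat m\le m_k$, $p_k\ge0$ for $k=1,2$, $p_1+p_2\le P_{\max}$, $m_1\le D_1$, $m_2\le m_1$, $\gamma_1=p_1|h_1|^2$, $\gamma_2=\frac{p_2|h_2|^2}{p_1|h_2|^2+1}$. If $\frac{Q^{-1}(\epsilon_k)}{\sqrt{N_k}}\le \frac{2\sqrt{\ln 2}}{4-\sqrt2}=0.64394\ldots$ for $k=1,2$ and the problem is feasible, then an optimal solution is $$m_1^*=m_2^*=D_1,\quad \gamma_k^*=\Gamma_k(D_1)\ (k=1,2),\quad p_1^*=\frac{\gamma_1^*}{|h_1|^2},\quad p_2^*=\frac{\gamma_1^*\gamma_2^*}{|h_1|^2}+\frac{\gamma_2^*}{|h_2|^2}.$$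
   Context: $Q^{-1}$ is the inverse of the Gaussian Q-function. The setting is a two-user single-antenna downlink with superposition coding and unit noise variances, where receiver 2's blocklength is forced to be at most receiver 1's so that receiver 1 can perform successive interference cancellation, while receiver 2 treats receiver 1's signal as noise. Blocklengths $m_k$ are treated as continuous variables. The constraint $F_k(m_k,\gamma_k)=0$ is the finite-blocklength rate relation $\frac{N_k}{m_k}=\log_2(1+\gamma_k)-\sqrt{\frac{1}{m_k}\big(1-\frac{1}{(1+\gamma_k)^2}\big)}\frac{Q^{-1}(\epsilon_k)}{\ln2}$. *)

theory Defs
  imports "HOL-Probability.Probability"
begin

definition Qfun :: "real \<Rightarrow> real" where
  "Qfun x = (LBINT t:{x<..}. std_normal_density t)"

text \<open>Inverse of the Gaussian Q-function (Q is a strictly decreasing bijection onto (0,1)).\<close>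
definition Qinv :: "real \<Rightarrow> real" where
  "Qinv e = (THE x. Qfun x = e)"

definition Ffun :: "real \<Rightarrow> real \<Rightarrow> real \<Rightarrow> real \<Rightarrow> real" where
  "Ffun N eps m g = sqrt ((1 / m) * (1 - 1 / (g + 1)^2)) * Qinv eps / ln 2
                     - log 2 (1 + g) + N / m"

definition Gam :: "real \<Rightarrow> real \<Rightarrow> real \<Rightarrow> real" where
  "Gam N eps m = (THE g. g > 0 \<and> Ffun N eps m g = 0)"

definition feasible ::
  "complex \<Rightarrow> complex \<Rightarrow> real \<Rightarrow> real \<Rightarrow> real \<Rightarrow> real \<Rightarrow> real \<Rightarrow> real \<Rightarrow> real
   \<Rightarrow> real \<Rightarrow> real \<Rightarrow> real \<Rightarrow> real \<Rightarrow> real \<Rightarrow> real \<Rightarrow> bool" where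
  "feasible h1 h2 D1 mhat Pmax N1 N2 e1 e2 m1 m2 p1 p2 g1 g2 \<longleftrightarrow>
     Ffun N1 e1 m1 g1 = 0 \<and> Ffun N2 e2 m2 g2 = 0 \<and>
     mhat \<le> m1 \<and> mhat \<le> m2 \<and> p1 \<ge> 0 \<and> p2 \<ge> 0 \<and>
     p1 + p2 \<le> Pmax \<and> m1 \<le> D1 \<and> m2 \<le> m1 \<and>
     g1 = p1 * (cmod h1)^2 \<and>
     g2 = p2 * (cmod h2)^2 / (p1 * (cmod h2)^2 + 1)"

end

theory Submission
  imports Defs
begin

(* Substituting u = 1 / sqrt m turns F(m, gamma) = 0 into the quadratic
   N u^2 + c V(gamma) u = log2 (1 + gamma), where c = Q^-1(eps) / ln 2 and
   V(gamma) = sqrt (1 - 1 / (1 + gamma)^2), so its positive root u = U(gamma) depends on the SNR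
   alone. U is strictly increasing; hence Gamma(m) decreases in m and every feasible SNR is at
   least Gamma(D1). Under the bound on Q^-1(eps) / sqrt N, the quotient
   U(gamma) / sqrt gamma = 1 / sqrt (m gamma) is nonincreasing in gamma, so the energy m gamma of
   every feasible user is at least D1 Gamma(D1). With successive interference cancellation the
   powers are p1 = gamma1 / |h1|^2 and p2 = gamma1 gamma2 / |h1|^2 + gamma2 / |h2|^2; both the
   total power and the objective m1 p1 + m2 p2 are monotone in the SNRs and energies, so the
   point m1 = m2 = D1, gamma_k = Gamma_k(D1) is feasible and optimal. *)

section \<open>Positive root of a quadratic\<close>

definition pos_root :: "real \<Rightarrow> real \<Rightarrow> real \<Rightarrow> real" where
  "pos_root a b q = (- b + sqrt (b\<^sup>2 + 4 * a * q)) / (2 * a)"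

lemma pos_root_discr_pos: "a > 0 \<Longrightarrow> q > 0 \<Longrightarrow> b\<^sup>2 + 4 * a * q > (0::real)"
  by (simp add: add_nonneg_pos)

lemma pos_root_linear_term:
  "a > 0 \<Longrightarrow> 2 * a * pos_root a b q + b = sqrt (b\<^sup>2 + 4 * a * q)"
  unfolding pos_root_def by simp

lemma pos_root_pos: assumes "a > 0" "q > 0" shows "pos_root a b q > 0"
proof -
  have "\<bar>b\<bar> < sqrt (b\<^sup>2 + 4 * a * q)"
    using real_sqrt_less_mono[of "b\<^sup>2" "b\<^sup>2 + 4 * a * q"] assms by simp
  thus ?thesis using assms unfolding pos_root_def by simp
qed

lemma pos_root_eq: assumes "a > 0" "q > 0" shows "a * (pos_root a b q)\<^sup>2 + b * pos_root a b q = q"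
proof -
  have "(sqrt (b\<^sup>2 + 4 * a * q))\<^sup>2 = b\<^sup>2 + 4 * a * q"
    using pos_root_discr_pos[OF assms, of b] by simp
  thus ?thesis using assms unfolding pos_root_def by (simp add: field_simps power2_eq_square)
qed

lemma pos_root_unique:
  assumes "a > 0" "q > 0" "y > 0" "a * y\<^sup>2 + b * y = q" shows "pos_root a b q = y"
proof -
  have "y * (a * y + b) > 0" using assms by (simp add: algebra_simps power2_eq_square)
  hence "a * y + b > 0" using assms(3) zero_less_mult_pos by blast
  moreover have "a * y > 0" using assms by simp
  ultimately have "2 * a * y + b > 0" by linarith
  moreover have "(2 * a * y + b)\<^sup>2 = b\<^sup>2 + 4 * a * q"
    using assms(4) by (auto simp: algebra_simps power2_eq_square)
  ultimately have "2 * a * y + b = sqrt (b\<^sup>2 + 4 * a * q)"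
    by (metis abs_of_pos real_sqrt_abs)
  thus ?thesis unfolding pos_root_def using assms by (simp add: field_simps)
qed

lemma pos_root_le:
  assumes "a > 0" "q > 0" "b \<ge> 0" "t > 0" "a * t\<^sup>2 + b * t \<ge> q"
  shows "pos_root a b q \<le> t"
proof (rule ccontr)
  assume "\<not> ?thesis"
  hence "a * t\<^sup>2 + b * t < a * (pos_root a b q)\<^sup>2 + b * pos_root a b q"
    using assms by (intro add_less_le_mono mult_strict_left_mono power_strict_mono mult_left_mono) auto
  thus False using pos_root_eq[OF assms(1,2), of b] assms(5) by linarith
qed

lemma pos_root_scale:
  assumes "a > 0" "s > 0" shows "pos_root a (sqrt s * b) (s * q) = sqrt s * pos_root a b q"
proof -
  have "(sqrt s * b)\<^sup>2 + 4 * a * (s * q) = s * (b\<^sup>2 + 4 * a * q)"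
    using assms by (simp add: power_mult_distrib algebra_simps)
  hence "sqrt ((sqrt s * b)\<^sup>2 + 4 * a * (s * q)) = sqrt s * sqrt (b\<^sup>2 + 4 * a * q)"
    by (simp add: real_sqrt_mult)
  thus ?thesis unfolding pos_root_def using assms by (simp add: field_simps)
qed

lemma has_real_derivative_pos_root:
  assumes a: "a > 0" and q: "q x > 0"
    and db: "(b has_real_derivative b') (at x)" and dq: "(q has_real_derivative q') (at x)"
  shows "((\<lambda>y. pos_root a (b y) (q y)) has_real_derivative
           (q' - b' * pos_root a (b x) (q x)) / (2 * a * pos_root a (b x) (q x) + b x)) (at x)"
proof -
  define S where "S = sqrt ((b x)\<^sup>2 + 4 * a * q x)"
  have discr: "(b x)\<^sup>2 + 4 * a * q x > 0" using pos_root_discr_pos[OF a q] .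
  have "((\<lambda>y. (b y)\<^sup>2 + 4 * a * q y) has_real_derivative 2 * b x * b' + 4 * a * q') (at x)"
    using db dq by (auto intro!: derivative_eq_intros)
  from DERIV_chain2[OF DERIV_real_sqrt[OF discr] this]
  have "((\<lambda>y. (- b y + sqrt ((b y)\<^sup>2 + 4 * a * q y)) / (2 * a)) has_real_derivative
          (- b' + inverse S / 2 * (2 * b x * b' + 4 * a * q')) / (2 * a)) (at x)"
    unfolding S_def by (intro DERIV_cdivide DERIV_add DERIV_minus db)
  moreover have "(- b' + inverse S / 2 * (2 * b x * b' + 4 * a * q')) / (2 * a)
      = (q' - b' * pos_root a (b x) (q x)) / (2 * a * pos_root a (b x) (q x) + b x)"
  proof -
    define r where "r = pos_root a (b x) (q x)"
    have bx: "b x = S - 2 * a * r"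
      unfolding S_def r_def using pos_root_linear_term[OF a, of "b x" "q x"] by linarith
    have "S > 0" unfolding S_def using discr by simp
    hence "(- b' + inverse S / 2 * (2 * (S - 2 * a * r) * b' + 4 * a * q')) / (2 * a)
        = (q' - b' * r) / (2 * a * r + (S - 2 * a * r))"
      using a by (simp add: field_simps)
    thus ?thesis unfolding r_def[symmetric] by (simp only: bx)
  qed
  ultimately show ?thesis unfolding pos_root_def by simp
qed

section \<open>Blocklength as a function of the SNR\<close>

definition sqrt_dispersion :: "real \<Rightarrow> real" where
  "sqrt_dispersion g = sqrt (1 - 1 / (g + 1)\<^sup>2)"

definition inv_sqrt_blocklength :: "real \<Rightarrow> real \<Rightarrow> real \<Rightarrow> real" where
  "inv_sqrt_blocklength N c g = pos_root N (c * sqrt_dispersion g) (log 2 (1 + g))"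

lemma sqrt_dispersion_eq:
  assumes "g \<ge> 0" shows "sqrt_dispersion g = sqrt g * sqrt (g + 2) / (1 + g)"
proof -
  have "1 - 1 / (g + 1)\<^sup>2 = ((g + 1)\<^sup>2 - 1) / (g + 1)\<^sup>2"
    using assms by (simp add: field_simps)
  also have "\<dots> = g * (g + 2) / (1 + g)\<^sup>2"
    by (simp add: power2_eq_square algebra_simps)
  finally have "1 - 1 / (g + 1)\<^sup>2 = g * (g + 2) / (1 + g)\<^sup>2" .
  thus ?thesis using assms unfolding sqrt_dispersion_def by (simp add: real_sqrt_mult real_sqrt_divide)
qed

lemma sqrt_dispersion_pos: "g > 0 \<Longrightarrow> sqrt_dispersion g > 0"
  by (simp add: sqrt_dispersion_eq)

lemma Ffun_eq_quadratic:
  assumes "m > 0"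
  shows "Ffun N e m g
    = N * (1 / sqrt m)\<^sup>2 + Qinv e / ln 2 * sqrt_dispersion g * (1 / sqrt m) - log 2 (1 + g)"
proof -
  have "sqrt (1 / m * (1 - 1 / (g + 1)\<^sup>2)) = 1 / sqrt m * sqrt_dispersion g"
    unfolding sqrt_dispersion_def by (simp add: real_sqrt_mult real_sqrt_divide)
  moreover have "N / m = N * (1 / sqrt m)\<^sup>2" using assms by (simp add: power_divide)
  ultimately show ?thesis unfolding Ffun_def by (simp add: algebra_simps)
qed

lemma Ffun_eq_0_iff:
  assumes "N > 0" "m > 0" "g > 0"
  shows "Ffun N e m g = 0 \<longleftrightarrow> inv_sqrt_blocklength N (Qinv e / ln 2) g = 1 / sqrt m"
proof -
  define b where "b = Qinv e / ln 2 * sqrt_dispersion g"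
  have F: "Ffun N e m g = N * (1 / sqrt m)\<^sup>2 + b * (1 / sqrt m) - log 2 (1 + g)"
    unfolding b_def Ffun_eq_quadratic[OF assms(2)] ..
  have L: "log 2 (1 + g) > 0" using assms by simp
  show ?thesis
    unfolding F inv_sqrt_blocklength_def b_def[symmetric]
    using pos_root_unique[OF assms(1) L, of "1 / sqrt m" b] pos_root_eq[OF assms(1) L, of b] assms
    by auto
qed

lemma Ffun_at_0: "m > 0 \<Longrightarrow> Ffun N e m 0 = N / m"
  unfolding Ffun_def by simp

lemma inv_sqrt_blocklength_at_0: "inv_sqrt_blocklength N c 0 = 0"
  unfolding inv_sqrt_blocklength_def pos_root_def sqrt_dispersion_def by simp

lemma continuous_on_inv_sqrt_blocklength:
  "N > 0 \<Longrightarrow> continuous_on {0..} (inv_sqrt_blocklength N c)"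
  unfolding inv_sqrt_blocklength_def pos_root_def sqrt_dispersion_def log_def
  by (auto intro!: continuous_intros)

lemma sqrt_dispersion_has_real_derivative:
  assumes "x > 0"
  shows "(sqrt_dispersion has_real_derivative 1 / ((x + 1)^3 * sqrt_dispersion x)) (at x)"
proof -
  have pos: "1 - 1 / (x + 1)\<^sup>2 > 0" using assms by (simp add: field_simps)
  have "((\<lambda>y. 1 - 1 / (y + 1)\<^sup>2) has_real_derivative 2 / (x + 1)^3) (at x)"
    using assms by (auto intro!: derivative_eq_intros simp: field_simps) algebra
  from DERIV_chain2[OF DERIV_real_sqrt[OF pos] this]
  show ?thesis unfolding sqrt_dispersion_def[abs_def] by (simp add: field_simps)
qed

lemma sqrt_dispersion_sq:
  assumes "x > 0" shows "(x + 1)^3 * (sqrt_dispersion x)\<^sup>2 = (x + 1) * x * (x + 2)"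
proof -
  have "(sqrt_dispersion x)\<^sup>2 = x * (x + 2) / (x + 1)\<^sup>2"
    using assms by (simp add: sqrt_dispersion_eq power_divide power_mult_distrib add.commute)
  hence sq: "(sqrt_dispersion x)\<^sup>2 * (x + 1)\<^sup>2 = x * (x + 2)"
    using assms by (simp add: eq_divide_eq)
  have "(x + 1)^3 * (sqrt_dispersion x)\<^sup>2 = (x + 1) * ((sqrt_dispersion x)\<^sup>2 * (x + 1)\<^sup>2)"
    by (simp add: power2_eq_square power3_eq_cube)
  thus ?thesis unfolding sq by simp
qed

lemma inv_sqrt_blocklength_has_pos_derivative:
  assumes N: "N > 0" and x: "x > 0"
  shows "\<exists>D. (inv_sqrt_blocklength N c has_real_derivative D) (at x) \<and> D > 0"
proof -
  define s where "s = sqrt_dispersion x"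
  define X where "X = inv_sqrt_blocklength N c x"
  have s: "s > 0" unfolding s_def using sqrt_dispersion_pos[OF x] .
  have L: "log 2 (1 + x) > 0" using x by simp
  have "((\<lambda>y. log 2 (1 + y)) has_real_derivative 1 / ((1 + x) * ln 2)) (at x)"
    using x by (auto intro!: derivative_eq_intros simp: log_def)
  from has_real_derivative_pos_root[OF N L DERIV_cmult[OF sqrt_dispersion_has_real_derivative[OF x]] this]
  have deriv: "(inv_sqrt_blocklength N c has_real_derivative
      (1 / ((1 + x) * ln 2) - c * (1 / ((x + 1)^3 * s)) * X) / (2 * N * X + c * s)) (at x)"
    unfolding inv_sqrt_blocklength_def[abs_def] X_def s_def .
  have denom: "2 * N * X + c * s > 0"
    unfolding X_def s_def inv_sqrt_blocklength_def pos_root_linear_term[OF N]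
    using pos_root_discr_pos[OF N L] by simp
  have "N * X\<^sup>2 + c * s * X = log 2 (1 + x)"
    unfolding X_def s_def inv_sqrt_blocklength_def using pos_root_eq[OF N L] .
  moreover have "N * X\<^sup>2 \<ge> 0" using N by simp
  ultimately have "c * s * X \<le> log 2 (1 + x)" by linarith
  also have "\<dots> \<le> x / ln 2"
    unfolding log_def using ln_add_one_self_le_self[of x] x by (simp add: divide_right_mono)
  finally have csX: "c * s * X \<le> x / ln 2" .
  have "c * (1 / ((x + 1)^3 * s)) * X = c * s * X / ((x + 1)^3 * s\<^sup>2)"
    using s by (simp add: field_simps power2_eq_square)
  also have "\<dots> = c * s * X / ((x + 1) * x * (x + 2))"
    unfolding s_def sqrt_dispersion_sq[OF x] ..
  also have "\<dots> \<le> x / ln 2 / ((x + 1) * x * (x + 2))"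
    using csX x by (intro divide_right_mono) auto
  also have "\<dots> = 1 / ((1 + x) * ln 2) / (x + 2)"
  proof -
    have "x \<noteq> 0" "x + 1 \<noteq> 0" "x + 2 \<noteq> 0" "ln (2::real) \<noteq> 0" using x by auto
    thus ?thesis by (simp add: divide_simps)
  qed
  also have "\<dots> < 1 / ((1 + x) * ln 2)"
    using x by (simp add: divide_simps)
  finally have "1 / ((1 + x) * ln 2) - c * (1 / ((x + 1)^3 * s)) * X > 0" by simp
  thus ?thesis using deriv denom by (intro exI[of _ "_ / _"]) auto
qed

lemma inv_sqrt_blocklength_strict_mono:
  assumes "N > 0" "0 < g" "g < g'"
  shows "inv_sqrt_blocklength N c g < inv_sqrt_blocklength N c g'"
  using assms
  by (intro DERIV_pos_imp_increasing[OF assms(3)]) (auto intro!: inv_sqrt_blocklength_has_pos_derivative)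

lemma inv_sqrt_blocklength_le_iff:
  assumes "N > 0" "g > 0" "g' > 0"
  shows "inv_sqrt_blocklength N c g \<le> inv_sqrt_blocklength N c g' \<longleftrightarrow> g \<le> g'"
  using inv_sqrt_blocklength_strict_mono[OF assms(1,2), of g' c]
    inv_sqrt_blocklength_strict_mono[OF assms(1,3), of g c]
  by (cases g g' rule: linorder_cases) auto

section \<open>Energy as a function of the SNR\<close>

definition inv_sqrt_energy :: "real \<Rightarrow> real \<Rightarrow> real \<Rightarrow> real" where
  "inv_sqrt_energy N c g = pos_root N (c * (sqrt (g + 2) / (1 + g))) (ln (1 + g) / (g * ln 2))"

lemma inv_sqrt_blocklength_eq_energy:
  assumes "N > 0" "g > 0"
  shows "inv_sqrt_blocklength N c g = sqrt g * inv_sqrt_energy N c g"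
proof -
  have b: "c * sqrt_dispersion g = sqrt g * (c * (sqrt (g + 2) / (1 + g)))"
    using assms by (simp add: sqrt_dispersion_eq)
  have q: "log 2 (1 + g) = g * (ln (1 + g) / (g * ln 2))"
    using assms by (simp add: log_def)
  show ?thesis
    unfolding inv_sqrt_blocklength_def inv_sqrt_energy_def b q by (rule pos_root_scale[OF assms])
qed

lemma Ffun_eq_0_imp_inv_sqrt_energy:
  assumes "N > 0" "m > 0" "g > 0" "Ffun N e m g = 0"
  shows "inv_sqrt_energy N (Qinv e / ln 2) g = 1 / sqrt (m * g)"
proof -
  have "sqrt g * inv_sqrt_energy N (Qinv e / ln 2) g = 1 / sqrt m"
    using assms Ffun_eq_0_iff inv_sqrt_blocklength_eq_energy by metis
  thus ?thesis using assms by (simp add: field_simps real_sqrt_mult)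
qed

lemma ln_add_one_ge: assumes "x \<ge> (0::real)" shows "2 * x / (2 + x) \<le> ln (1 + x)"
proof -
  let ?f = "\<lambda>t::real. ln (1 + t) - 2 * t / (2 + t)"
  have "?f 0 \<le> ?f x"
  proof (rule DERIV_nonneg_imp_nondecreasing[OF assms])
    fix t :: real assume t: "0 \<le> t"
    have "(?f has_real_derivative 1 / (1 + t) - 4 / (2 + t)\<^sup>2) (at t)"
      using t by (auto intro!: derivative_eq_intros simp: field_simps power2_eq_square)
    moreover have "1 / (1 + t) - 4 / (2 + t)\<^sup>2 = t\<^sup>2 / ((1 + t) * (2 + t)\<^sup>2)"
    proof -
      have "1 + t > 0" "(2 + t)\<^sup>2 > 0" using t by auto
      thus ?thesis by (simp add: field_simps power2_eq_square)
    qed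
    ultimately show "\<exists>y. (?f has_real_derivative y) (at t) \<and> y \<ge> 0"
      using t by auto
  qed
  thus ?thesis by simp
qed

lemma add_one_mult_ln_gt: assumes "x > (0::real)" shows "(1 + x) * ln (1 + x) - x > 0"
proof -
  have "(1 + x) * (2 * x / (2 + x)) - x = x\<^sup>2 / (2 + x)"
    using assms by (simp add: field_simps power2_eq_square)
  moreover have "(1 + x) * (2 * x / (2 + x)) \<le> (1 + x) * ln (1 + x)"
    using ln_add_one_ge assms by (intro mult_left_mono) auto
  moreover have "x\<^sup>2 / (2 + x) > 0" using assms by simp
  ultimately show ?thesis by linarith
qed

lemma energy_slope_poly_nonneg:
  fixes x l :: real
  assumes x: "x > 0" and l: "2 * x / (2 + x) \<le> l"
  shows "4 * (x + 2) * (1 + x)\<^sup>2 * ((1 + x) * l - x)\<^sup>2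
         + 2 / 3 * (2 * (x + 3) * (x + 2) * x\<^sup>2 * ((1 + x) * l - x) - x^3 * l * (x + 3)\<^sup>2) \<ge> 0"
    (is "?P \<ge> 0")
proof -
  \<comment> \<open>In terms of \<open>d \<ge> 0\<close> the polynomial has only nonnegative coefficients.\<close>
  define d where "d = (2 + x) * l - 2 * x"
  have d: "d \<ge> 0" using l x unfolding d_def by (simp add: field_simps)
  have "?P * (2 + x)\<^sup>2
      = x^4 * (x + 2) * (4 * x\<^sup>2 + 20 / 3 * x)
        + x\<^sup>2 * (x + 2) * d * (8 * (1 + x)^3 + 2 / 3 * (x + 3) * (x\<^sup>2 + 3 * x + 4))
        + 4 * (x + 2) * (1 + x)^4 * d\<^sup>2"
    unfolding d_def by algebra
  also have "\<dots> \<ge> 0" using x d by (intro add_nonneg_nonneg mult_nonneg_nonneg) auto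
  finally show ?thesis using x by (simp add: zero_le_mult_iff)
qed

lemma energy_slope_ineq:
  fixes x l lam :: real
  assumes x: "x > 0" and l: "2 * x / (2 + x) \<le> l" and lam: "lam > 0"
  defines "B \<equiv> ((1 + x) * l - x) / ((1 + x) * x\<^sup>2 * lam)"
  shows "l / (x * lam) * ((x + 3)\<^sup>2 / (4 * (x + 2) * (1 + x)^4))
    \<le> 3 / 2 * lam * B\<^sup>2 + (x + 3) / (2 * (1 + x)^3) * B"
proof -
  have "(3 / 2 * lam * B\<^sup>2 + (x + 3) / (2 * (1 + x)^3) * B
          - l / (x * lam) * ((x + 3)\<^sup>2 / (4 * (x + 2) * (1 + x)^4)))
          * (8 * lam * x^4 * (x + 2) * (1 + x)^4)
     = 3 * (4 * (x + 2) * (1 + x)\<^sup>2 * ((1 + x) * l - x)\<^sup>2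
         + 2 / 3 * (2 * (x + 3) * (x + 2) * x\<^sup>2 * ((1 + x) * l - x) - x^3 * l * (x + 3)\<^sup>2))"
  proof -
    have "x \<noteq> 0" "lam \<noteq> 0" "1 + x \<noteq> 0" "x + 2 \<noteq> 0" using x lam by auto
    thus ?thesis unfolding B_def by (simp add: divide_simps) algebra
  qed
  also have "\<dots> \<ge> 0" by (rule mult_nonneg_nonneg[OF _ energy_slope_poly_nonneg[OF x l]]) simp
  finally have "0 \<le> (3 / 2 * lam * B\<^sup>2 + (x + 3) / (2 * (1 + x)^3) * B
          - l / (x * lam) * ((x + 3)\<^sup>2 / (4 * (x + 2) * (1 + x)^4)))
          * (8 * lam * x^4 * (x + 2) * (1 + x)^4)" .
  moreover have "8 * lam * x^4 * (x + 2) * (1 + x)^4 > 0" using x lam by simp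
  ultimately show ?thesis by (simp add: zero_le_mult_iff)
qed

lemma inv_sqrt_energy_le:
  assumes N: "N > 0" and x: "x > 0" and c: "c > 0" and cond: "c\<^sup>2 * ln 2 \<le> 2 / 3 * N"
  defines "A \<equiv> (x + 3) / (2 * sqrt (x + 2) * (1 + x)\<^sup>2)"
    and "B \<equiv> ((1 + x) * ln (1 + x) - x) / ((1 + x) * x\<^sup>2 * ln 2)"
  shows "inv_sqrt_energy N c x \<le> B / (c * A)"
proof -
  define a where "a = sqrt (x + 2) / (1 + x)"
  define \<beta> where "\<beta> = ln (1 + x) / (x * ln 2)"
  define t where "t = B / (c * A)"
  have A: "A > 0" unfolding A_def using x by simp
  have t: "t > 0" unfolding t_def B_def using add_one_mult_ln_gt[OF x] x c A by simp
  have \<beta>: "\<beta> > 0" unfolding \<beta>_def using x by simp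
  have aA: "a * A = (x + 3) / (2 * (1 + x)^3)"
  proof -
    have "sqrt (x + 2) \<noteq> 0" "1 + x \<noteq> 0" using x by auto
    thus ?thesis unfolding a_def A_def by (simp add: divide_simps power2_eq_square power3_eq_cube)
  qed
  have A2: "A\<^sup>2 = (x + 3)\<^sup>2 / (4 * (x + 2) * (1 + x)^4)"
    unfolding A_def using x by (simp add: power_divide power_mult_distrib)
  have "2 * x / (2 + x) \<le> ln (1 + x)" using ln_add_one_ge x by simp
  from energy_slope_ineq[OF x this, of "ln 2"]
  have "\<beta> * A\<^sup>2 \<le> 3 / 2 * ln 2 * B\<^sup>2 + a * A * B"
    unfolding aA A2 \<beta>_def B_def by simp
  hence "\<beta> \<le> 3 / 2 * ln 2 * (c * t)\<^sup>2 + c * a * t"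
    unfolding t_def using c A by (simp add: field_simps power2_eq_square)
  also have "3 / 2 * ln 2 * (c * t)\<^sup>2 = 3 / 2 * (c\<^sup>2 * ln 2) * t\<^sup>2"
    by (simp add: power_mult_distrib)
  also have "\<dots> \<le> N * t\<^sup>2" using cond by (intro mult_right_mono) auto
  finally have "N * t\<^sup>2 + c * a * t \<ge> \<beta>" by simp
  moreover have "c * a \<ge> 0" unfolding a_def using c x by simp
  ultimately have "pos_root N (c * a) \<beta> \<le> t" using pos_root_le[OF N \<beta> _ t] by simp
  thus ?thesis unfolding t_def inv_sqrt_energy_def a_def \<beta>_def by simp
qed

lemma inv_sqrt_energy_slope_bound:
  assumes N: "N > 0" and x: "x > 0" and cond: "c > 0 \<longrightarrow> c\<^sup>2 * ln 2 \<le> 2 / 3 * N"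
  defines "A \<equiv> (x + 3) / (2 * sqrt (x + 2) * (1 + x)\<^sup>2)"
    and "B \<equiv> ((1 + x) * ln (1 + x) - x) / ((1 + x) * x\<^sup>2 * ln 2)"
  shows "c * A * inv_sqrt_energy N c x \<le> B"
proof (cases "c > 0")
  case True
  have "A > 0" unfolding A_def using x by simp
  have "inv_sqrt_energy N c x \<le> B / (c * A)"
    using inv_sqrt_energy_le[OF N x True] cond True unfolding A_def B_def by simp
  hence "c * A * inv_sqrt_energy N c x \<le> c * A * (B / (c * A))"
    using True \<open>A > 0\<close> by (intro mult_left_mono) auto
  also have "\<dots> = B" using True \<open>A > 0\<close> by simp
  finally show ?thesis .
next
  case False
  have "A > 0" "B > 0" unfolding A_def B_def using add_one_mult_ln_gt[OF x] x by simp_all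
  moreover have "inv_sqrt_energy N c x > 0"
    unfolding inv_sqrt_energy_def using pos_root_pos[OF N] x by simp
  ultimately show ?thesis using False by (smt (verit) mult_nonpos_nonneg mult_pos_pos)
qed

lemma inv_sqrt_energy_has_nonpos_derivative:
  assumes N: "N > 0" and x: "x > 0" and cond: "c > 0 \<longrightarrow> c\<^sup>2 * ln 2 \<le> 2 / 3 * N"
  shows "\<exists>D. (inv_sqrt_energy N c has_real_derivative D) (at x) \<and> D \<le> 0"
proof -
  define A where "A = (x + 3) / (2 * sqrt (x + 2) * (1 + x)\<^sup>2)"
  define B where "B = ((1 + x) * ln (1 + x) - x) / ((1 + x) * x\<^sup>2 * ln 2)"
  define T where "T = inv_sqrt_energy N c x"
  have \<beta>: "ln (1 + x) / (x * ln 2) > 0" using x by simp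
  have dA: "((\<lambda>y. sqrt (y + 2) / (1 + y)) has_real_derivative - A) (at x)"
  proof -
    have "sqrt (x + 2) > 0" "sqrt (x + 2) * sqrt (x + 2) = x + 2" using x by auto
    hence "((1 / (2 * sqrt (x + 2))) * (1 + x) - sqrt (x + 2)) / (1 + x)\<^sup>2 = - A"
      unfolding A_def using x by (simp add: field_simps power2_eq_square minus_divide_left)
    thus ?thesis using x by (auto intro!: derivative_eq_intros simp: field_simps power2_eq_square)
  qed
  have dB: "((\<lambda>y. ln (1 + y) / (y * ln 2)) has_real_derivative - B) (at x)"
  proof -
    have "((1 / (1 + x)) * (x * ln 2) - ln (1 + x) * ln 2) / (x * ln 2)\<^sup>2 = - B"
    proof -
      have "ln (2::real) \<noteq> 0" "x \<noteq> 0" "1 + x \<noteq> 0" using x by auto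
      thus ?thesis unfolding B_def by (simp add: divide_simps) algebra
    qed
    thus ?thesis using x by (auto intro!: derivative_eq_intros simp: field_simps power2_eq_square)
  qed
  from has_real_derivative_pos_root[where b = "\<lambda>y. c * (sqrt (y + 2) / (1 + y))"
      and q = "\<lambda>y. ln (1 + y) / (y * ln 2)", OF N \<beta> DERIV_cmult[OF dA] dB]
  have "(inv_sqrt_energy N c has_real_derivative
      (- B - c * (- A) * T) / (2 * N * T + c * (sqrt (x + 2) / (1 + x)))) (at x)"
    unfolding T_def inv_sqrt_energy_def[abs_def] .
  moreover have "2 * N * T + c * (sqrt (x + 2) / (1 + x)) > 0"
    unfolding T_def inv_sqrt_energy_def pos_root_linear_term[OF N]
    using pos_root_discr_pos[OF N \<beta>] by simp
  moreover have "c * A * T \<le> B"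
    using inv_sqrt_energy_slope_bound[OF N x cond] unfolding A_def B_def T_def .
  ultimately show ?thesis by (intro exI[of _ "_ / _"]) (auto simp: divide_nonpos_pos)
qed

lemma inv_sqrt_energy_antimono:
  assumes "N > 0" "c > 0 \<longrightarrow> c\<^sup>2 * ln 2 \<le> 2 / 3 * N" "0 < g" "g \<le> g'"
  shows "inv_sqrt_energy N c g' \<le> inv_sqrt_energy N c g"
  using assms
  by (intro DERIV_nonpos_imp_nonincreasing[OF assms(4)])
    (auto intro!: inv_sqrt_energy_has_nonpos_derivative)

lemma Qinv_bound_imp_energy_cond:
  assumes N: "N > 0" and bound: "q / sqrt N \<le> 2 * sqrt (ln 2) / (4 - sqrt 2)"
  shows "q / ln 2 > 0 \<longrightarrow> (q / ln 2)\<^sup>2 * ln 2 \<le> 2 / 3 * N"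
proof
  assume "q / ln 2 > 0"
  hence q: "q > 0" by (simp add: zero_less_divide_iff)
  have sqrt2: "sqrt 2 \<le> 3 / 2"
    by (rule real_le_lsqrt) (auto simp: power2_eq_square)
  have "(4 - sqrt 2)\<^sup>2 = 18 - 8 * sqrt 2" by (simp add: power2_eq_square algebra_simps)
  hence six: "(4 - sqrt 2)\<^sup>2 \<ge> 6" using sqrt2 by simp
  have "(q / sqrt N)\<^sup>2 \<le> (2 * sqrt (ln 2) / (4 - sqrt 2))\<^sup>2"
    using bound q N by (intro power_mono) auto
  hence "q\<^sup>2 / N \<le> 4 * ln 2 / (4 - sqrt 2)\<^sup>2"
    using N by (simp add: power_divide power_mult_distrib)
  also have "\<dots> \<le> 4 * ln 2 / 6" using six by (intro divide_left_mono) auto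
  finally have "q\<^sup>2 \<le> 2 / 3 * ln 2 * N" using N by (simp add: divide_le_eq)
  thus "(q / ln 2)\<^sup>2 * ln 2 \<le> 2 / 3 * N" by (simp add: power_divide power2_eq_square field_simps)
qed

section \<open>The implicit SNR function\<close>

lemma Gam_root:
  assumes N: "N > 0" and m0: "0 < m0" "m0 \<le> D" and g0: "g0 > 0" "Ffun N e m0 g0 = 0"
  shows "Gam N e D > 0 \<and> Ffun N e D (Gam N e D) = 0"
proof -
  define c where "c = Qinv e / ln 2"
  have D: "D > 0" using m0 by simp
  have root_iff: "Ffun N e D g = 0 \<longleftrightarrow> inv_sqrt_blocklength N c g = 1 / sqrt D" if "g > 0" for g
    unfolding c_def using Ffun_eq_0_iff[OF N D that] .
  have lo: "inv_sqrt_blocklength N c 0 \<le> 1 / sqrt D"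
    using D by (simp add: inv_sqrt_blocklength_at_0)
  have hi: "1 / sqrt D \<le> inv_sqrt_blocklength N c g0"
    using Ffun_eq_0_iff[OF N m0(1) g0(1)] g0(2) m0 unfolding c_def
    by (simp add: divide_left_mono)
  have "continuous_on {0..g0} (inv_sqrt_blocklength N c)"
    by (rule continuous_on_subset[OF continuous_on_inv_sqrt_blocklength[OF N]]) auto
  then obtain \<gamma> where \<gamma>: "0 \<le> \<gamma>" "\<gamma> \<le> g0" "inv_sqrt_blocklength N c \<gamma> = 1 / sqrt D"
    using IVT'[of "inv_sqrt_blocklength N c", OF lo hi] g0(1) by auto
  have \<gamma>_pos: "\<gamma> > 0"
    using \<gamma> D inv_sqrt_blocklength_at_0[of N c] by (cases "\<gamma> = 0") auto
  have "Gam N e D = \<gamma>"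
    unfolding Gam_def
  proof (rule the_equality)
    show "\<gamma> > 0 \<and> Ffun N e D \<gamma> = 0" using \<gamma>_pos root_iff \<gamma>(3) by simp
  next
    fix g assume "g > 0 \<and> Ffun N e D g = 0"
    thus "g = \<gamma>" using root_iff \<gamma>(3) \<gamma>_pos inv_sqrt_blocklength_le_iff[OF N] by (metis order.antisym order.refl)
  qed
  thus ?thesis using \<gamma>_pos root_iff \<gamma>(3) by simp
qed

lemma Gam_le:
  assumes N: "N > 0" and m: "0 < m" "m \<le> D" and g: "g > 0" "Ffun N e m g = 0"
  shows "Gam N e D \<le> g"
proof -
  define c where "c = Qinv e / ln 2"
  have D: "D > 0" using m by simp
  obtain \<Gamma>: "Gam N e D > 0" "Ffun N e D (Gam N e D) = 0" using Gam_root[OF N m g] by blast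
  have "inv_sqrt_blocklength N c (Gam N e D) = 1 / sqrt D"
    using Ffun_eq_0_iff[OF N D \<Gamma>(1)] \<Gamma>(2) unfolding c_def by simp
  also have "\<dots> \<le> 1 / sqrt m" using m by (simp add: divide_left_mono)
  also have "\<dots> = inv_sqrt_blocklength N c g"
    using Ffun_eq_0_iff[OF N m(1) g(1)] g(2) unfolding c_def by simp
  finally show ?thesis using inv_sqrt_blocklength_le_iff[OF N \<Gamma>(1) g(1)] by simp
qed

lemma Gam_energy_le:
  assumes N: "N > 0" and bound: "Qinv e / sqrt N \<le> 2 * sqrt (ln 2) / (4 - sqrt 2)"
    and m: "0 < m" "m \<le> D" and g: "g > 0" "Ffun N e m g = 0"
  shows "D * Gam N e D \<le> m * g"
proof -
  define c where "c = Qinv e / ln 2"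
  have D: "D > 0" using m by simp
  obtain \<Gamma>: "Gam N e D > 0" "Ffun N e D (Gam N e D) = 0" using Gam_root[OF N m g] by blast
  have "1 / sqrt (m * g) = inv_sqrt_energy N c g"
    using Ffun_eq_0_imp_inv_sqrt_energy[OF N m(1) g] unfolding c_def by simp
  also have "\<dots> \<le> inv_sqrt_energy N c (Gam N e D)"
    using inv_sqrt_energy_antimono[OF N Qinv_bound_imp_energy_cond[OF N bound] \<Gamma>(1)]
      Gam_le[OF N m g] unfolding c_def by simp
  also have "\<dots> = 1 / sqrt (D * Gam N e D)"
    using Ffun_eq_0_imp_inv_sqrt_energy[OF N D \<Gamma>] unfolding c_def by simp
  finally have "1 / sqrt (m * g) \<le> 1 / sqrt (D * Gam N e D)" .
  moreover have "0 < sqrt (m * g)" "0 < sqrt (D * Gam N e D)" using m g D \<Gamma>(1) by auto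
  ultimately have "sqrt (D * Gam N e D) \<le> sqrt (m * g)"
    by (metis divide_inverse mult_1 inverse_le_iff_le)
  thus ?thesis by simp
qed

section \<open>Feasible points under successive interference cancellation\<close>

lemma feasibleD:
  assumes F: "feasible h1 h2 D1 mhat Pmax N1 N2 e1 e2 m1 m2 p1 p2 g1 g2"
    and h: "h1 \<noteq> 0" "h2 \<noteq> 0" and mhat: "mhat > 0" and N: "N1 > 0" "N2 > 0"
  shows "0 < m2 \<and> m2 \<le> m1 \<and> m1 \<le> D1 \<and> 0 < g1 \<and> 0 < g2 \<and>
    p1 = g1 / (cmod h1)\<^sup>2 \<and> p2 = g1 * g2 / (cmod h1)\<^sup>2 + g2 / (cmod h2)\<^sup>2"
proof -
  define H1 where "H1 = (cmod h1)\<^sup>2"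
  define H2 where "H2 = (cmod h2)\<^sup>2"
  have H: "H1 > 0" "H2 > 0" unfolding H1_def H2_def using h by auto
  note F' = F[unfolded feasible_def, folded H1_def H2_def]
  have m: "0 < m2" "m2 \<le> m1" "m1 \<le> D1" using F' mhat by auto
  have den: "p1 * H2 + 1 > 0" using F' H by (simp add: add_nonneg_pos)
  have "g1 \<ge> 0" "g2 \<ge> 0" using F' H den by auto
  moreover have "g1 \<noteq> 0" "g2 \<noteq> 0" using F' m N Ffun_at_0 by auto
  ultimately have g: "g1 > 0" "g2 > 0" by auto
  have p1: "p1 = g1 / H1" using F' H by simp
  have "p2 * H2 = g2 * (p1 * H2 + 1)" using F' den by simp
  hence "p2 = g1 * g2 / H1 + g2 / H2" using p1 H by (simp add: field_simps)
  thus ?thesis using m g p1 unfolding H1_def H2_def by simp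
qed

lemma feasible_sic_powersI:
  assumes "Ffun N1 e1 m1 g1 = 0" "Ffun N2 e2 m2 g2 = 0"
    and "mhat \<le> m2" "m2 \<le> m1" "m1 \<le> D1" "g1 \<ge> 0" "g2 \<ge> 0" "h1 \<noteq> 0" "h2 \<noteq> 0"
    and "g1 / (cmod h1)\<^sup>2 + (g1 * g2 / (cmod h1)\<^sup>2 + g2 / (cmod h2)\<^sup>2) \<le> Pmax"
  shows "feasible h1 h2 D1 mhat Pmax N1 N2 e1 e2 m1 m2
    (g1 / (cmod h1)\<^sup>2) (g1 * g2 / (cmod h1)\<^sup>2 + g2 / (cmod h2)\<^sup>2) g1 g2"
proof -
  define H1 where "H1 = (cmod h1)\<^sup>2"
  define H2 where "H2 = (cmod h2)\<^sup>2"
  have H: "H1 > 0" "H2 > 0" unfolding H1_def H2_def using assms by auto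
  have "g2 = (g1 * g2 / H1 + g2 / H2) * H2 / (g1 / H1 * H2 + 1)"
  proof -
    have "g1 / H1 * H2 + 1 > 0" using assms H by (simp add: add_nonneg_pos)
    moreover have "(g1 * g2 / H1 + g2 / H2) * H2 = g2 * (g1 / H1 * H2 + 1)"
      using H by (simp add: field_simps)
    ultimately show ?thesis by simp
  qed
  thus ?thesis using assms H unfolding feasible_def H1_def[symmetric] H2_def[symmetric] by simp
qed

lemma sic_energy_le:
  fixes D m1 m2 s1 s2 \<gamma>1 \<gamma>2 H1 H2 :: real
  assumes "0 < \<gamma>1" "\<gamma>1 \<le> s1" "0 < \<gamma>2" "D \<ge> 0"
    and "D * \<gamma>1 \<le> m1 * s1" "D * \<gamma>2 \<le> m2 * s2" "H1 > 0" "H2 > 0"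
  shows "D * (\<gamma>1 / H1) + D * (\<gamma>1 * \<gamma>2 / H1 + \<gamma>2 / H2)
    \<le> m1 * (s1 / H1) + m2 * (s1 * s2 / H1 + s2 / H2)"
proof -
  have "(D * \<gamma>2) * \<gamma>1 \<le> (m2 * s2) * s1"
  proof (rule mult_mono[OF assms(6,2)])
    show "0 \<le> m2 * s2" using order.trans[OF mult_nonneg_nonneg assms(6)] assms(3,4) by simp
  qed (use assms in auto)
  hence "D * \<gamma>1 / H1 + (D * \<gamma>2) * \<gamma>1 / H1 + D * \<gamma>2 / H2
      \<le> m1 * s1 / H1 + (m2 * s2) * s1 / H1 + m2 * s2 / H2"
    using assms by (intro add_mono divide_right_mono) auto
  thus ?thesis by (simp add: algebra_simps add_divide_distrib)
qed

lemma feasible_Gam_bounds: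
  assumes F: "feasible h1 h2 D1 mhat Pmax N1 N2 e1 e2 m1 m2 q1 q2 s1 s2"
    and h: "h1 \<noteq> 0" "h2 \<noteq> 0" and mhat: "mhat > 0" and N: "N1 > 0" "N2 > 0"
    and bound: "Qinv e1 / sqrt N1 \<le> 2 * sqrt (ln 2) / (4 - sqrt 2)"
      "Qinv e2 / sqrt N2 \<le> 2 * sqrt (ln 2) / (4 - sqrt 2)"
  shows "Gam N1 e1 D1 \<le> s1 \<and> D1 * Gam N1 e1 D1 \<le> m1 * s1 \<and>
    Gam N2 e2 D1 \<le> s2 \<and> D1 * Gam N2 e2 D1 \<le> m2 * s2"
proof -
  have roots: "Ffun N1 e1 m1 s1 = 0" "Ffun N2 e2 m2 s2 = 0" using F unfolding feasible_def by auto
  have "0 < m2 \<and> m2 \<le> m1 \<and> m1 \<le> D1 \<and> 0 < s1 \<and> 0 < s2"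
    using feasibleD[OF F h mhat N] by simp
  hence m: "0 < m1" "m1 \<le> D1" "0 < m2" "m2 \<le> D1" and s: "0 < s1" "0 < s2" by auto
  show ?thesis
    using Gam_le[OF N(1) m(1,2) s(1) roots(1)] Gam_le[OF N(2) m(3,4) s(2) roots(2)]
      Gam_energy_le[OF N(1) bound(1) m(1,2) s(1) roots(1)]
      Gam_energy_le[OF N(2) bound(2) m(3,4) s(2) roots(2)] by simp
qed

theorem corollary2:
  fixes h1 h2 :: complex
    and D1 D2 mhat Pmax N1 N2 e1 e2 :: real
  assumes "h1 \<noteq> 0" and "h2 \<noteq> 0" and "cmod h1 > cmod h2"
    and "D1 < D2" and "mhat > 0" and "Pmax > 0"
    and "N1 > 0" and "N2 > 0"
    and "0 < e1" and "e1 < 1" and "0 < e2" and "e2 < 1"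
    and "Qinv e1 / sqrt N1 \<le> 2 * sqrt (ln 2) / (4 - sqrt 2)"
    and "Qinv e2 / sqrt N2 \<le> 2 * sqrt (ln 2) / (4 - sqrt 2)"
    and "\<exists>m1 m2 p1 p2 g1 g2. feasible h1 h2 D1 mhat Pmax N1 N2 e1 e2 m1 m2 p1 p2 g1 g2"
  shows "let g1 = Gam N1 e1 D1; g2 = Gam N2 e2 D1;
             p1 = g1 / (cmod h1)^2;
             p2 = g1 * g2 / (cmod h1)^2 + g2 / (cmod h2)^2
         in feasible h1 h2 D1 mhat Pmax N1 N2 e1 e2 D1 D1 p1 p2 g1 g2 \<and>
            (\<forall>m1 m2 q1 q2 s1 s2.
               feasible h1 h2 D1 mhat Pmax N1 N2 e1 e2 m1 m2 q1 q2 s1 s2 \<longrightarrow>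
               D1 * p1 + D1 * p2 \<le> m1 * q1 + m2 * q2)"
proof -
  note N = assms(7,8)
  define \<Gamma>1 where "\<Gamma>1 = Gam N1 e1 D1"
  define \<Gamma>2 where "\<Gamma>2 = Gam N2 e2 D1"
  have H: "(cmod h1)\<^sup>2 > 0" "(cmod h2)\<^sup>2 > 0" using assms(1,2) by auto
  note point = feasibleD[OF _ assms(1,2,5) N] feasible_Gam_bounds[OF _ assms(1,2,5) N assms(13,14)]
  obtain m1 m2 p1 p2 g1 g2 where F: "feasible h1 h2 D1 mhat Pmax N1 N2 e1 e2 m1 m2 p1 p2 g1 g2"
    using assms(15) by blast
  hence roots: "Ffun N1 e1 m1 g1 = 0" "Ffun N2 e2 m2 g2 = 0" "mhat \<le> m2" "p1 + p2 \<le> Pmax"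
    unfolding feasible_def by auto
  have \<Gamma>: "0 < \<Gamma>1" "Ffun N1 e1 D1 \<Gamma>1 = 0" "0 < \<Gamma>2" "Ffun N2 e2 D1 \<Gamma>2 = 0"
    using Gam_root[OF N(1) _ _ _ roots(1)] Gam_root[OF N(2) _ _ _ roots(2)] point(1)[OF F]
    unfolding \<Gamma>1_def \<Gamma>2_def by auto
  have "\<Gamma>1 / (cmod h1)\<^sup>2 + (\<Gamma>1 * \<Gamma>2 / (cmod h1)\<^sup>2 + \<Gamma>2 / (cmod h2)\<^sup>2) \<le> p1 + p2"
    using sic_energy_le[of \<Gamma>1 g1 \<Gamma>2 1 1 1 g2] point[OF F] \<Gamma> H unfolding \<Gamma>1_def \<Gamma>2_def by auto
  hence "feasible h1 h2 D1 mhat Pmax N1 N2 e1 e2 D1 D1 (\<Gamma>1 / (cmod h1)\<^sup>2)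
      (\<Gamma>1 * \<Gamma>2 / (cmod h1)\<^sup>2 + \<Gamma>2 / (cmod h2)\<^sup>2) \<Gamma>1 \<Gamma>2"
    using feasible_sic_powersI \<Gamma> roots point(1)[OF F] assms(1,2) by force
  moreover have "D1 * (\<Gamma>1 / (cmod h1)\<^sup>2) + D1 * (\<Gamma>1 * \<Gamma>2 / (cmod h1)\<^sup>2 + \<Gamma>2 / (cmod h2)\<^sup>2)
      \<le> m1 * q1 + m2 * q2"
    if "feasible h1 h2 D1 mhat Pmax N1 N2 e1 e2 m1 m2 q1 q2 s1 s2" for m1 m2 q1 q2 s1 s2
    using sic_energy_le[of \<Gamma>1 s1 \<Gamma>2 D1 m1 m2 s2] point[OF that] \<Gamma> H
    unfolding \<Gamma>1_def \<Gamma>2_def by auto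
  ultimately show ?thesis unfolding Let_def \<Gamma>1_def \<Gamma>2_def by blast
qed

end
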